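(* Under the assumptions $\alpha=2$, the far-destination approximation (all relay–destination distances replaced by $d$), and conditioned on $N\ge 1$, the energy harvesting decode-and-forward protocol with a uniformly randomly chosen relay achieves diversity gain $2$: $$-\lim_{P\to\infty}\frac{\log \mathcal{P}_1(P)}{\log P}=2,\qquad \mathcal{P}_1(P)=\mathcal{P}\big(x_0+\eta y_i(x_i-\epsilon)<\epsilon,\ x_i>\epsilon\big)+\mathcal{P}\big(x_0<\epsilon,\ x_i<\epsilon\big).$$
   Context: Source at origin, destination at distance $d>0$; relays form a homogeneous Poisson point process of intensity $\lambda$ in the disc $\mathcal D$ of radius $R_{\mathcal D}$ centred at the source; the chosen relay is uniform in $\mathcal D$ at distance $d_i$ from the source. Fading $h_d,h_i,g_i$ independent $\mathcal{CN}(0,1)$; $x_0=|h_d|^2/(1+d^2)$, $x_i=|h_i|^2/(1+d_i^2)$, $y_i=|g_i|^2/(1+d^2)$. $\tau=2^{2R}-1$ for target rate $R>0$, $\epsilon=\tau/P$ with transmit power $P$, $\eta\in(0,1]$. Relay decodes iff $x_i>\epsilon$, transmits with power $\eta(Px_i-\tau)$; outage when the combined SNR $P(x_0+\eta y_i(x_i-\epsilon))<\tau$. *)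

theory Defs
  imports "HOL-Probability.Probability"
begin

definition CN01 :: "complex measure" where
  "CN01 = density lborel (\<lambda>z. ennreal (exp (- (cmod z)\<^sup>2) / pi))"

text \<open>Uniform distribution of the chosen relay position in the disc of radius RD
  centred at the source (origin).\<close>
definition disc_uniform :: "real \<Rightarrow> complex measure" where
  "disc_uniform RD = uniform_measure lborel (cball 0 RD)"

text \<open>Joint law of (h_d, h_i, g_i, relay position), all independent.\<close>
definition relay_space :: "real \<Rightarrow> (complex \<times> complex \<times> complex \<times> complex) measure" where
  "relay_space RD = CN01 \<Otimes>\<^sub>M (CN01 \<Otimes>\<^sub>M (CN01 \<Otimes>\<^sub>M disc_uniform RD))"

definition x0 :: "real \<Rightarrow> complex \<times> complex \<times> complex \<times> complex \<Rightarrow> real" where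
  "x0 d \<omega> = (cmod (fst \<omega>))\<^sup>2 / (1 + d\<^sup>2)"

definition xi :: "complex \<times> complex \<times> complex \<times> complex \<Rightarrow> real" where
  "xi \<omega> = (cmod (fst (snd \<omega>)))\<^sup>2 / (1 + (cmod (snd (snd (snd \<omega>))))\<^sup>2)"

text \<open>Far-destination approximation: relay-destination distance replaced by d.\<close>
definition yi :: "real \<Rightarrow> complex \<times> complex \<times> complex \<times> complex \<Rightarrow> real" where
  "yi d \<omega> = (cmod (fst (snd (snd \<omega>))))\<^sup>2 / (1 + d\<^sup>2)"

definition outage1 :: "real \<Rightarrow> real \<Rightarrow> real \<Rightarrow> real \<Rightarrow> real \<Rightarrow> real" where
  "outage1 d RD \<eta> Rt P =
     (let \<tau> = 2 powr (2 * Rt) - 1; \<epsilon> = \<tau> / P in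
       measure (relay_space RD)
         {\<omega>. x0 d \<omega> + \<eta> * yi d \<omega> * (xi \<omega> - \<epsilon>) < \<epsilon> \<and> xi \<omega> > \<epsilon>}
     + measure (relay_space RD) {\<omega>. x0 d \<omega> < \<epsilon> \<and> xi \<omega> < \<epsilon>})"

end

theory Submission
  imports Defs "HOL-Real_Asymp.Real_Asymp"
begin

text \<open>
  For a CN(0,1) coefficient h the gain |h|^2 is exponentially distributed, so
  P(|h|^2 < s) lies between s e^{-s} and s. Both outage events force |h_d|^2 < (1 + d^2) \<epsilon>.
  If the relay fails to decode, then also |h_i|^2 < (1 + R_D^2) \<epsilon>, which gives probability
  \<Theta>(\<epsilon>^2). If it decodes, the combined SNR condition forces |g_i|^2 (x_i - \<epsilon>) < t with
  t = (1 + d^2) \<epsilon> / \<eta>; slicing |g_i|^2 into the dyadic bands [2^-k, 2^(1-k)) for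
  k \<le> log2 (1/t) bounds this event by O(\<epsilon>^2 log (1/\<epsilon>)). Hence the outage probability
  lies between (\<epsilon> e^{-\<epsilon>})^2 and O(\<epsilon>^2 log (1/\<epsilon>)) with \<epsilon> = \<tau>/P, and both
  bounds have diversity exponent 2.
\<close>

lemma nn_integral_gaussian_kernel: "(\<integral>\<^sup>+x. ennreal (exp (- x\<^sup>2) / sqrt pi) \<partial>lborel) = 1"
proof -
  interpret prob_space "density lborel (normal_density 0 (1 / sqrt 2))"
    using prob_space_normal_density[of "1 / sqrt 2" 0] by simp
  have "normal_density 0 (1 / sqrt 2) x = exp (- x\<^sup>2) / sqrt pi" for x
    by (simp add: normal_density_def power_divide real_sqrt_divide)
  then show ?thesis
    using emeasure_space_1 by (simp add: emeasure_density)
qed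

lemma prob_space_CN01: "prob_space CN01"
proof
  have "emeasure CN01 (space CN01) = (\<integral>\<^sup>+z. ennreal (exp (- (cmod z)\<^sup>2) / pi) \<partial>lborel)"
    by (simp add: CN01_def emeasure_density)
  also have "\<dots> = (\<integral>\<^sup>+z. ennreal (\<Prod>b\<in>Basis. exp (- ((z::complex) \<bullet> b)\<^sup>2) / sqrt pi) \<partial>lborel)"
  proof (intro nn_integral_cong)
    fix z :: complex
    have "(cmod z)\<^sup>2 = (Re z)\<^sup>2 + (Im z)\<^sup>2" by (simp add: cmod_def)
    then show "ennreal (exp (- (cmod z)\<^sup>2) / pi) = ennreal (\<Prod>b\<in>Basis. exp (- (z \<bullet> b)\<^sup>2) / sqrt pi)"
      by (simp add: Basis_complex_def inner_complex_def exp_add[symmetric] field_simps)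
  qed
  also have "\<dots> = (\<Prod>b\<in>(Basis::complex set). \<integral>\<^sup>+x. ennreal (exp (- x\<^sup>2) / sqrt pi) \<partial>lborel)"
    using nn_integral_lborel_prod[where 'a=complex, of "\<lambda>b x. exp (- x\<^sup>2) / sqrt pi"]
    by (simp add: prod_ennreal)
  also have "\<dots> = 1" by (simp add: nn_integral_gaussian_kernel)
  finally show "emeasure CN01 (space CN01) = 1" .
qed

lemma sets_CN01 [measurable_cong]: "sets CN01 = sets borel"
  by (simp add: CN01_def)

lemma measure_CN01_UNIV: "measure CN01 UNIV = 1"
  using prob_space.prob_space[OF prob_space_CN01] by (simp add: CN01_def)

definition gain_below :: "real \<Rightarrow> complex set" where
  "gain_below s = {z. (cmod z)\<^sup>2 < s}"

lemma gain_below_eq_ball: "gain_below s = ball 0 (sqrt s)"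
proof -
  have "cmod z < sqrt s \<longleftrightarrow> (cmod z)\<^sup>2 < s" for z :: complex
    using real_sqrt_less_iff[of "(cmod z)\<^sup>2" s] by simp
  then show ?thesis
    unfolding gain_below_def ball_def dist_norm by simp
qed

lemma sets_gain_below [measurable]: "gain_below s \<in> sets borel"
  by (simp add: gain_below_eq_ball)

lemma emeasure_CN01_gain_below:
  "emeasure CN01 (gain_below s) =
    (\<integral>\<^sup>+z. ennreal (exp (- (cmod z)\<^sup>2) / pi) * indicator (gain_below s) z \<partial>lborel)"
  by (simp add: CN01_def emeasure_density)

lemma emeasure_lborel_gain_below:
  "0 \<le> s \<Longrightarrow> emeasure lborel (gain_below s) = ennreal (pi * s)"
  by (simp add: gain_below_eq_ball emeasure_ball unit_ball_vol_2)

lemma measure_CN01_gain_below_le: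
  assumes "0 \<le> s"
  shows "measure CN01 (gain_below s) \<le> s"
proof -
  interpret prob_space CN01 by (rule prob_space_CN01)
  have "emeasure CN01 (gain_below s) \<le> (\<integral>\<^sup>+z. ennreal (1 / pi) * indicator (gain_below s) z \<partial>lborel)"
    unfolding emeasure_CN01_gain_below
    by (intro nn_integral_mono mult_right_mono ennreal_leI divide_right_mono) auto
  also have "\<dots> = ennreal s"
    using assms
    by (simp add: nn_integral_cmult_indicator emeasure_lborel_gain_below ennreal_mult'[symmetric])
  finally show ?thesis
    using assms by (simp add: emeasure_eq_measure)
qed

lemma measure_CN01_gain_below_ge:
  assumes "0 \<le> s"
  shows "s * exp (- s) \<le> measure CN01 (gain_below s)"
proof -
  interpret prob_space CN01 by (rule prob_space_CN01)
  have "ennreal (s * exp (- s)) =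
      (\<integral>\<^sup>+z. ennreal (exp (- s) / pi) * indicator (gain_below s) z \<partial>lborel)"
    using assms
    by (simp add: nn_integral_cmult_indicator emeasure_lborel_gain_below ennreal_mult'[symmetric])
  also have "\<dots> \<le> emeasure CN01 (gain_below s)"
    unfolding emeasure_CN01_gain_below
    by (intro nn_integral_mono)
      (auto simp: gain_below_def split: split_indicator intro!: ennreal_leI divide_right_mono)
  finally show ?thesis
    using assms by (simp add: emeasure_eq_measure)
qed

lemma sets_disc_uniform [measurable_cong]: "sets (disc_uniform RD) = sets borel"
  by (simp add: disc_uniform_def)

lemma prob_space_disc_uniform: "0 < RD \<Longrightarrow> prob_space (disc_uniform RD)"
  unfolding disc_uniform_def
  by (rule prob_space_uniform_measure) (simp_all add: emeasure_cball unit_ball_vol_2)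

lemma measure_disc_uniform_UNIV: "0 < RD \<Longrightarrow> measure (disc_uniform RD) UNIV = 1"
  using prob_space.prob_space[OF prob_space_disc_uniform] by (simp add: disc_uniform_def)

lemma measure_disc_uniform_outside: "measure (disc_uniform RD) (- cball 0 RD) = 0"
proof -
  have "emeasure (disc_uniform RD) (- cball 0 RD) =
      emeasure lborel (cball 0 RD \<inter> - cball 0 RD) / emeasure lborel (cball (0::complex) RD)"
    using emeasure_uniform_measure[of "cball (0::complex) RD" lborel "- cball 0 RD"]
    by (simp add: disc_uniform_def)
  then show ?thesis by (simp add: measure_def)
qed

lemma measure_pair_measure_Times:
  assumes "finite_measure M" "finite_measure N" "A \<in> sets M" "B \<in> sets N"
  shows "measure (M \<Otimes>\<^sub>M N) (A \<times> B) = measure M A * measure N B"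
proof -
  interpret M: finite_measure M by fact
  interpret N: finite_measure N by fact
  show ?thesis
    using N.emeasure_pair_measure_Times[OF assms(3,4)] unfolding measure_def[of "M \<Otimes>\<^sub>M N"]
    by (simp add: M.emeasure_eq_measure N.emeasure_eq_measure ennreal_mult''[symmetric])
qed

lemma prob_space_relay_space: "0 < RD \<Longrightarrow> prob_space (relay_space RD)"
  unfolding relay_space_def by (intro prob_space_pair prob_space_CN01 prob_space_disc_uniform)

lemma sets_relay_space:
  "sets (relay_space RD) = sets (borel \<Otimes>\<^sub>M borel \<Otimes>\<^sub>M borel \<Otimes>\<^sub>M (borel :: complex measure))"
  unfolding relay_space_def by (intro sets_pair_measure_cong sets_CN01 sets_disc_uniform)

lemma Times_in_sets_relay_space:
  "A \<in> sets borel \<Longrightarrow> B \<in> sets borel \<Longrightarrow> C \<in> sets borel \<Longrightarrow> D \<in> sets borel \<Longrightarrow>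
    A \<times> B \<times> C \<times> D \<in> sets (relay_space RD)"
  unfolding sets_relay_space by (intro pair_measureI) auto

lemma measure_relay_space_Times:
  assumes "0 < RD" "A \<in> sets borel" "B \<in> sets borel" "C \<in> sets borel" "D \<in> sets borel"
  shows "measure (relay_space RD) (A \<times> B \<times> C \<times> D) =
    measure CN01 A * measure CN01 B * measure CN01 C * measure (disc_uniform RD) D"
proof -
  have fin: "finite_measure CN01" "finite_measure (disc_uniform RD)"
    using prob_space_CN01 prob_space_disc_uniform[OF assms(1)] by (simp_all add: prob_space_def)
  have "measure (CN01 \<Otimes>\<^sub>M disc_uniform RD) (C \<times> D) = measure CN01 C * measure (disc_uniform RD) D"
    using fin assms by (intro measure_pair_measure_Times) auto
  moreover have "measure (CN01 \<Otimes>\<^sub>M CN01 \<Otimes>\<^sub>M disc_uniform RD) (B \<times> C \<times> D) =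
      measure CN01 B * measure (CN01 \<Otimes>\<^sub>M disc_uniform RD) (C \<times> D)"
    using fin assms by (intro measure_pair_measure_Times finite_measure_pair_measure pair_measureI) auto
  moreover have "measure (relay_space RD) (A \<times> B \<times> C \<times> D) =
      measure CN01 A * measure (CN01 \<Otimes>\<^sub>M CN01 \<Otimes>\<^sub>M disc_uniform RD) (B \<times> C \<times> D)"
    unfolding relay_space_def using fin assms
    by (intro measure_pair_measure_Times finite_measure_pair_measure pair_measureI) auto
  ultimately show ?thesis by (simp add: mult.assoc)
qed

lemma measure_relay_space_Times_le:
  assumes "0 < RD" "A \<in> sets borel" "B \<in> sets borel" "C \<in> sets borel" "D \<in> sets borel"
    and "measure CN01 A \<le> \<alpha>" "measure CN01 B \<le> \<beta>" "measure CN01 C \<le> \<gamma>"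
    and "measure (disc_uniform RD) D \<le> \<delta>"
  shows "measure (relay_space RD) (A \<times> B \<times> C \<times> D) \<le> \<alpha> * \<beta> * \<gamma> * \<delta>"
  unfolding measure_relay_space_Times[OF assms(1-5)] using assms(6-9)
  by (intro mult_mono mult_nonneg_nonneg) (auto intro: order.trans[OF measure_nonneg])

lemma measure_relay_space_le_on_disc:
  assumes "0 < RD" "R \<in> sets (relay_space RD)" "S \<inter> UNIV \<times> UNIV \<times> UNIV \<times> cball 0 RD \<subseteq> R"
  shows "measure (relay_space RD) S \<le> measure (relay_space RD) R"
proof -
  interpret prob_space "relay_space RD" using assms(1) by (rule prob_space_relay_space)
  define Z :: "(complex \<times> complex \<times> complex \<times> complex) set"
    where "Z = UNIV \<times> UNIV \<times> UNIV \<times> - cball 0 RD"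
  have Z: "Z \<in> sets (relay_space RD)"
    unfolding Z_def by (intro Times_in_sets_relay_space) auto
  have "measure (relay_space RD) S \<le> measure (relay_space RD) (R \<union> Z)"
    using assms(3) Z assms(2) by (intro finite_measure_mono) (auto simp: Z_def)
  also have "\<dots> \<le> measure (relay_space RD) R + measure (relay_space RD) Z"
    using assms(2) Z by (rule measure_Un_le)
  also have "measure (relay_space RD) Z = 0"
    unfolding Z_def using assms(1)
    by (subst measure_relay_space_Times) (auto simp: measure_disc_uniform_outside)
  finally show ?thesis by simp
qed

definition outage_decoded ::
    "real \<Rightarrow> real \<Rightarrow> real \<Rightarrow> (complex \<times> complex \<times> complex \<times> complex) set" where
  "outage_decoded d \<eta> \<epsilon> = {\<omega>. x0 d \<omega> + \<eta> * yi d \<omega> * (xi \<omega> - \<epsilon>) < \<epsilon> \<and> xi \<omega> > \<epsilon>}"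

definition outage_undecoded :: "real \<Rightarrow> real \<Rightarrow> (complex \<times> complex \<times> complex \<times> complex) set" where
  "outage_undecoded d \<epsilon> = {\<omega>. x0 d \<omega> < \<epsilon> \<and> xi \<omega> < \<epsilon>}"

lemma outage1_eq:
  "outage1 d RD \<eta> Rt P =
    measure (relay_space RD) (outage_decoded d \<eta> ((2 powr (2 * Rt) - 1) / P)) +
    measure (relay_space RD) (outage_undecoded d ((2 powr (2 * Rt) - 1) / P))"
  by (simp add: outage1_def outage_decoded_def outage_undecoded_def Let_def)

lemma x0_less_iff: "x0 d \<omega> < \<epsilon> \<longleftrightarrow> (cmod (fst \<omega>))\<^sup>2 < (1 + d\<^sup>2) * \<epsilon>"
  by (simp add: x0_def pos_divide_less_eq add_pos_nonneg mult.commute)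

lemma xi_le_gain: "xi \<omega> \<le> (cmod (fst (snd \<omega>)))\<^sup>2"
  by (simp add: xi_def divide_le_eq add_pos_nonneg mult_le_cancel_left1)

lemma gain_le_xi_on_disc:
  assumes "snd (snd (snd \<omega>)) \<in> cball 0 RD"
  shows "(cmod (fst (snd \<omega>)))\<^sup>2 \<le> (1 + RD\<^sup>2) * xi \<omega>"
proof -
  have "(cmod (snd (snd (snd \<omega>))))\<^sup>2 \<le> RD\<^sup>2"
    using assms by (intro power_mono) auto
  then have "(cmod (fst (snd \<omega>)))\<^sup>2 * (1 + (cmod (snd (snd (snd \<omega>))))\<^sup>2)
      \<le> (1 + RD\<^sup>2) * (cmod (fst (snd \<omega>)))\<^sup>2"
    by (subst mult.commute) (intro mult_left_mono, simp_all)
  then show ?thesis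
    by (simp add: xi_def le_divide_eq add_pos_nonneg)
qed

lemma dyadic_cover:
  fixes c u t :: real
  assumes "0 \<le> c" "0 < u" "c * u < t"
  shows "u < t \<or> c < (1/2)^m \<or> (\<exists>k\<in>{1..m}. u < t * 2^k \<and> c < 2 * (1/2)^k)"
proof (induction m)
  case 0
  show ?case
  proof (cases "c < 1")
    case False
    then have "u \<le> c * u" using assms(2) by simp
    then show ?thesis using assms(3) by simp
  qed simp
next
  case (Suc m)
  show ?case
  proof (cases "c < (1/2) ^ Suc m")
    case False
    then have "(1/2) ^ Suc m * u \<le> c * u"
      using assms(2) by (simp add: mult_right_mono)
    then have "(1/2) ^ Suc m * u < t"
      using assms(3) by linarith
    then have "u < t * 2 ^ Suc m"
      by (simp add: field_simps power_divide)
    moreover have "2 * (1/2) ^ Suc m = ((1/2) ^ m :: real)" by simp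
    ultimately show ?thesis
      using Suc.IH by (metis atLeastAtMost_iff le_Suc_eq le_add1 plus_1_eq_Suc)
  qed simp
qed

lemma outage_decoded_subset_on_disc:
  fixes d RD \<eta> \<epsilon> :: real and m :: nat
  assumes "0 < \<eta>" "0 < \<epsilon>"
  defines "K \<equiv> 1 + d\<^sup>2" and "L \<equiv> 1 + RD\<^sup>2" and "t \<equiv> (1 + d\<^sup>2) * \<epsilon> / \<eta>"
  shows "outage_decoded d \<eta> \<epsilon> \<inter> UNIV \<times> UNIV \<times> UNIV \<times> cball 0 RD \<subseteq>
    gain_below (K * \<epsilon>) \<times> gain_below (L * (\<epsilon> + t)) \<times> UNIV \<times> UNIV
    \<union> gain_below (K * \<epsilon>) \<times> UNIV \<times> gain_below ((1/2) ^ m) \<times> UNIV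
    \<union> (\<Union>k\<in>{1..m}. gain_below (K * \<epsilon>) \<times> gain_below (L * (\<epsilon> + t * 2 ^ k)) \<times> gain_below (2 * (1/2) ^ k) \<times> UNIV)"
proof
  fix \<omega> assume "\<omega> \<in> outage_decoded d \<eta> \<epsilon> \<inter> UNIV \<times> UNIV \<times> UNIV \<times> cball 0 RD"
  then have dec: "x0 d \<omega> + \<eta> * yi d \<omega> * (xi \<omega> - \<epsilon>) < \<epsilon>" "\<epsilon> < xi \<omega>"
    and disc: "snd (snd (snd \<omega>)) \<in> cball 0 RD"
    by (auto simp: outage_decoded_def)
  obtain hd hi g z where \<omega>: "\<omega> = (hd, hi, g, z)" by (cases \<omega>) auto
  define u where "u = xi \<omega> - \<epsilon>"
  have K: "0 < K" and L: "0 < L" by (simp_all add: K_def L_def add_pos_nonneg)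
  have u: "0 < u" using dec(2) by (simp add: u_def)
  have x0: "0 \<le> x0 d \<omega>" by (simp add: x0_def)
  have "0 \<le> \<eta> * yi d \<omega> * u" using assms(1) u by (simp add: yi_def)
  then have "x0 d \<omega> < \<epsilon>" using dec(1) by (simp add: u_def)
  then have a: "(cmod hd)\<^sup>2 < K * \<epsilon>" by (simp add: x0_less_iff \<omega> K_def)
  have "\<eta> * ((cmod g)\<^sup>2 / K) * u < \<epsilon>"
    using dec(1) x0 by (simp add: \<omega> yi_def u_def K_def)
  then have c: "(cmod g)\<^sup>2 * u < t"
    using assms(1) K by (simp add: t_def K_def[symmetric] field_simps)
  have "(cmod hi)\<^sup>2 \<le> L * (\<epsilon> + u)"
    using gain_le_xi_on_disc[OF disc] by (simp add: \<omega> L_def u_def)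
  then have b: "(cmod hi)\<^sup>2 < L * (\<epsilon> + v)" if "u < v" for v
    using that L by (smt (verit) mult_strict_left_mono)
  show "\<omega> \<in> gain_below (K * \<epsilon>) \<times> gain_below (L * (\<epsilon> + t)) \<times> UNIV \<times> UNIV
    \<union> gain_below (K * \<epsilon>) \<times> UNIV \<times> gain_below ((1/2) ^ m) \<times> UNIV
    \<union> (\<Union>k\<in>{1..m}. gain_below (K * \<epsilon>) \<times> gain_below (L * (\<epsilon> + t * 2 ^ k)) \<times> gain_below (2 * (1/2) ^ k) \<times> UNIV)"
    using dyadic_cover[OF zero_le_power2 u c, of m] a b by (auto simp: \<omega> gain_below_def)
qed

lemma measure_outage_decoded_le:
  fixes d RD \<eta> \<epsilon> :: real and m :: nat
  assumes "0 < RD" "0 < \<eta>" "0 < \<epsilon>"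
  defines "K \<equiv> 1 + d\<^sup>2" and "L \<equiv> 1 + RD\<^sup>2" and "t \<equiv> (1 + d\<^sup>2) * \<epsilon> / \<eta>"
  shows "measure (relay_space RD) (outage_decoded d \<eta> \<epsilon>) \<le>
    K * \<epsilon> * (L * (\<epsilon> + t) + (1/2) ^ m + (\<Sum>k\<in>{1..m}. L * (\<epsilon> + t * 2 ^ k) * (2 * (1/2) ^ k)))"
proof -
  interpret prob_space "relay_space RD" using assms(1) by (rule prob_space_relay_space)
  have K: "0 < K" and L: "0 < L" and t: "0 < t"
    using assms(2,3) by (simp_all add: K_def L_def t_def add_pos_nonneg)
  define R0 where "R0 = gain_below (K * \<epsilon>) \<times> gain_below (L * (\<epsilon> + t)) \<times> (UNIV :: complex set) \<times> (UNIV :: complex set)"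
  define R1 where "R1 = gain_below (K * \<epsilon>) \<times> (UNIV :: complex set) \<times> gain_below ((1/2) ^ m) \<times> (UNIV :: complex set)"
  define R where "R k = gain_below (K * \<epsilon>) \<times> gain_below (L * (\<epsilon> + t * 2 ^ k)) \<times> gain_below (2 * (1/2) ^ k) \<times> (UNIV :: complex set)"
    for k :: nat
  have sets: "R0 \<in> events" "R1 \<in> events" "R k \<in> events" for k
    unfolding R0_def R1_def R_def by (intro Times_in_sets_relay_space; simp)+
  have "outage_decoded d \<eta> \<epsilon> \<inter> UNIV \<times> UNIV \<times> UNIV \<times> cball 0 RD \<subseteq> R0 \<union> R1 \<union> (\<Union>k\<in>{1..m}. R k)"
    unfolding R0_def R1_def R_def K_def L_def t_def by (rule outage_decoded_subset_on_disc[OF assms(2,3)])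
  then have "measure (relay_space RD) (outage_decoded d \<eta> \<epsilon>) \<le> measure (relay_space RD) (R0 \<union> R1 \<union> (\<Union>k\<in>{1..m}. R k))"
    using assms(1) sets by (intro measure_relay_space_le_on_disc) auto
  also have "\<dots> \<le> measure (relay_space RD) R0 + measure (relay_space RD) R1 + measure (relay_space RD) (\<Union>k\<in>{1..m}. R k)"
    using sets by (intro order.trans[OF measure_Un_le] add_right_mono measure_Un_le) auto
  also have "measure (relay_space RD) (\<Union>k\<in>{1..m}. R k) \<le> (\<Sum>k\<in>{1..m}. measure (relay_space RD) (R k))"
    using sets by (intro finite_measure_subadditive_finite) auto
  also have "measure (relay_space RD) R0 \<le> K * \<epsilon> * (L * (\<epsilon> + t)) * 1 * 1"
    unfolding R0_def using assms(1,3) K L t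
    by (intro measure_relay_space_Times_le)
      (auto simp: measure_CN01_UNIV measure_disc_uniform_UNIV intro!: measure_CN01_gain_below_le)
  also have "measure (relay_space RD) R1 \<le> K * \<epsilon> * 1 * (1/2) ^ m * 1"
    unfolding R1_def using assms(1,3) K
    by (intro measure_relay_space_Times_le)
      (auto simp: measure_CN01_UNIV measure_disc_uniform_UNIV intro!: measure_CN01_gain_below_le)
  also have "(\<Sum>k\<in>{1..m}. measure (relay_space RD) (R k)) \<le>
      (\<Sum>k\<in>{1..m}. K * \<epsilon> * (L * (\<epsilon> + t * 2 ^ k)) * (2 * (1/2) ^ k) * 1)"
    unfolding R_def using assms(1,3) K L t
    by (intro sum_mono measure_relay_space_Times_le)
      (auto simp: measure_CN01_UNIV measure_disc_uniform_UNIV intro!: measure_CN01_gain_below_le)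
  finally show ?thesis
    by (simp add: ring_distribs sum_distrib_left mult.assoc)
qed

lemma dyadic_sum_le:
  fixes \<epsilon> t L :: real and m :: nat
  assumes "0 \<le> \<epsilon>" "\<epsilon> \<le> t" "0 \<le> L" "(1/2) ^ m \<le> t"
  shows "L * (\<epsilon> + t) + (1/2) ^ m + (\<Sum>k\<in>{1..m}. L * (\<epsilon> + t * 2 ^ k) * (2 * (1/2) ^ k))
    \<le> t * (2 * L + 1 + 4 * L * m)"
proof -
  have term_le: "L * (\<epsilon> + t * 2 ^ k) * (2 * (1/2) ^ k) \<le> 4 * L * t" for k :: nat
  proof -
    have "\<epsilon> * (1/2) ^ k \<le> \<epsilon>" using assms(1) by (simp add: mult_left_le power_le_one)
    have "L * (\<epsilon> + t * 2 ^ k) * (2 * (1/2) ^ k) = 2 * L * (\<epsilon> * (1/2) ^ k + t)"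
      by (simp add: field_simps)
    also have "\<dots> \<le> 2 * L * (2 * t)"
      using \<open>\<epsilon> * (1/2) ^ k \<le> \<epsilon>\<close> assms(2,3) by (intro mult_left_mono) auto
    finally show ?thesis by simp
  qed
  have "(\<Sum>k\<in>{1..m}. L * (\<epsilon> + t * 2 ^ k) * (2 * (1/2) ^ k)) \<le> m * (4 * L * t)"
    using sum_bounded_above[of "{1..m}", OF term_le] by simp
  moreover have "L * (\<epsilon> + t) \<le> L * (2 * t)"
    using assms(2,3) by (intro mult_left_mono) auto
  ultimately show ?thesis
    using assms(4) by (simp add: algebra_simps)
qed

lemma measure_outage_decoded_le_log:
  fixes d RD \<eta> \<epsilon> :: real
  assumes "0 < RD" "0 < \<eta>" "\<eta> \<le> 1" "0 < \<epsilon>" "(1 + d\<^sup>2) * \<epsilon> \<le> \<eta>"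
  defines "K \<equiv> 1 + d\<^sup>2" and "L \<equiv> 1 + RD\<^sup>2" and "t \<equiv> (1 + d\<^sup>2) * \<epsilon> / \<eta>"
  shows "measure (relay_space RD) (outage_decoded d \<eta> \<epsilon>) \<le>
    K * \<epsilon> * (t * (2 * L + 1 + 4 * L * (log 2 (1 / t) + 1)))"
proof -
  have K: "1 \<le> K" and L: "0 \<le> L" by (simp_all add: K_def L_def add_nonneg_nonneg)
  have t: "0 < t" "t \<le> 1"
    using assms(2,4,5) by (simp_all add: t_def K_def add_pos_nonneg)
  have "\<epsilon> \<le> K * \<epsilon> / \<eta>"
    using K assms(2-4) by (simp add: le_divide_eq mult_mono)
  then have \<epsilon>t: "\<epsilon> \<le> t" by (simp add: t_def K_def)
  define m where "m = nat \<lceil>log 2 (1 / t)\<rceil>"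
  have log: "0 \<le> log 2 (1 / t)" using t by simp
  have m: "log 2 (1 / t) \<le> m" "m \<le> log 2 (1 / t) + 1"
    unfolding m_def using log by linarith+
  have "1 / t = 2 powr log 2 (1 / t)" using t(1) by simp
  also have "\<dots> \<le> 2 powr m" using m(1) by (intro powr_mono) auto
  finally have "1 / t \<le> 2 ^ m" by (simp add: powr_realpow)
  then have "(1/2) ^ m \<le> t"
    using t(1) by (simp add: power_one_over field_simps)
  have "measure (relay_space RD) (outage_decoded d \<eta> \<epsilon>) \<le>
      K * \<epsilon> * (L * (\<epsilon> + t) + (1/2) ^ m + (\<Sum>k\<in>{1..m}. L * (\<epsilon> + t * 2 ^ k) * (2 * (1/2) ^ k)))"
    using measure_outage_decoded_le[OF assms(1,2,4)] by (simp add: K_def L_def t_def)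
  also have "\<dots> \<le> K * \<epsilon> * (t * (2 * L + 1 + 4 * L * m))"
    using K assms(4) \<epsilon>t L \<open>(1/2) ^ m \<le> t\<close>
    by (intro mult_left_mono dyadic_sum_le) auto
  also have "\<dots> \<le> K * \<epsilon> * (t * (2 * L + 1 + 4 * L * (log 2 (1 / t) + 1)))"
    using K assms(4) t L m(2) by (intro mult_left_mono add_left_mono) auto
  finally show ?thesis .
qed

lemma outage_undecoded_subset_on_disc:
  "outage_undecoded d \<epsilon> \<inter> UNIV \<times> UNIV \<times> UNIV \<times> cball 0 RD \<subseteq>
    gain_below ((1 + d\<^sup>2) * \<epsilon>) \<times> gain_below ((1 + RD\<^sup>2) * \<epsilon>) \<times> UNIV \<times> UNIV"
proof
  fix \<omega> assume "\<omega> \<in> outage_undecoded d \<epsilon> \<inter> UNIV \<times> UNIV \<times> UNIV \<times> cball 0 RD"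
  then have "x0 d \<omega> < \<epsilon>" "xi \<omega> < \<epsilon>" and disc: "snd (snd (snd \<omega>)) \<in> cball 0 RD"
    by (auto simp: outage_undecoded_def)
  moreover have "(1 + RD\<^sup>2) * xi \<omega> < (1 + RD\<^sup>2) * \<epsilon>"
    using \<open>xi \<omega> < \<epsilon>\<close> by (simp add: add_pos_nonneg)
  ultimately show "\<omega> \<in> gain_below ((1 + d\<^sup>2) * \<epsilon>) \<times> gain_below ((1 + RD\<^sup>2) * \<epsilon>) \<times> UNIV \<times> UNIV"
    using gain_le_xi_on_disc[OF disc] by (auto simp: gain_below_def x0_less_iff mem_Times_iff)
qed

lemma measure_outage_undecoded_le:
  assumes "0 < RD" "0 \<le> \<epsilon>"
  shows "measure (relay_space RD) (outage_undecoded d \<epsilon>) \<le> (1 + d\<^sup>2) * \<epsilon> * ((1 + RD\<^sup>2) * \<epsilon>)"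
proof -
  have "measure (relay_space RD) (outage_undecoded d \<epsilon>) \<le>
      measure (relay_space RD) (gain_below ((1 + d\<^sup>2) * \<epsilon>) \<times> gain_below ((1 + RD\<^sup>2) * \<epsilon>) \<times> UNIV \<times> (UNIV :: complex set))"
    using assms(1) outage_undecoded_subset_on_disc
    by (intro measure_relay_space_le_on_disc Times_in_sets_relay_space) simp_all
  also have "\<dots> \<le> (1 + d\<^sup>2) * \<epsilon> * ((1 + RD\<^sup>2) * \<epsilon>) * 1 * 1"
    using assms
    by (intro measure_relay_space_Times_le)
      (simp_all add: measure_CN01_UNIV measure_disc_uniform_UNIV measure_CN01_gain_below_le)
  finally show ?thesis by simp
qed

lemma gain_below_Times_subset_outage_undecoded:
  "gain_below \<epsilon> \<times> gain_below \<epsilon> \<times> UNIV \<times> UNIV \<subseteq> outage_undecoded d \<epsilon>"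
proof
  fix \<omega> :: "complex \<times> complex \<times> complex \<times> complex"
  assume "\<omega> \<in> gain_below \<epsilon> \<times> gain_below \<epsilon> \<times> UNIV \<times> UNIV"
  then have "(cmod (fst \<omega>))\<^sup>2 < \<epsilon>" "(cmod (fst (snd \<omega>)))\<^sup>2 < \<epsilon>"
    by (auto simp: gain_below_def)
  moreover from this(1) have "0 \<le> \<epsilon>"
    using zero_le_power2[of "cmod (fst \<omega>)"] by linarith
  then have "\<epsilon> \<le> (1 + d\<^sup>2) * \<epsilon>"
    using mult_right_mono[of 1 "1 + d\<^sup>2" \<epsilon>] by simp
  ultimately show "\<omega> \<in> outage_undecoded d \<epsilon>"
    using xi_le_gain[of \<omega>] by (auto simp: outage_undecoded_def x0_less_iff)
qed

lemma sets_outage_undecoded: "outage_undecoded d \<epsilon> \<in> sets (relay_space RD)"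
proof -
  have "{\<omega> \<in> space (borel \<Otimes>\<^sub>M borel \<Otimes>\<^sub>M borel \<Otimes>\<^sub>M borel). x0 d \<omega> < \<epsilon> \<and> xi \<omega> < \<epsilon>}
      \<in> sets (borel \<Otimes>\<^sub>M borel \<Otimes>\<^sub>M borel \<Otimes>\<^sub>M (borel :: complex measure))"
    unfolding x0_def xi_def by measurable
  then show ?thesis
    by (simp add: sets_relay_space outage_undecoded_def space_pair_measure)
qed

lemma measure_outage_undecoded_ge:
  assumes "0 < RD" "0 \<le> \<epsilon>"
  shows "(\<epsilon> * exp (- \<epsilon>))\<^sup>2 \<le> measure (relay_space RD) (outage_undecoded d \<epsilon>)"
proof -
  interpret prob_space "relay_space RD" using assms(1) by (rule prob_space_relay_space)
  have "(\<epsilon> * exp (- \<epsilon>))\<^sup>2 \<le> measure CN01 (gain_below \<epsilon>) * measure CN01 (gain_below \<epsilon>)"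
    unfolding power2_eq_square using measure_CN01_gain_below_ge[OF assms(2)] assms(2)
    by (intro mult_mono) auto
  also have "\<dots> = measure (relay_space RD) (gain_below \<epsilon> \<times> gain_below \<epsilon> \<times> UNIV \<times> (UNIV :: complex set))"
    using measure_relay_space_Times[OF assms(1), of "gain_below \<epsilon>" "gain_below \<epsilon>" UNIV UNIV] assms(1)
    by (simp add: measure_CN01_UNIV measure_disc_uniform_UNIV)
  also have "\<dots> \<le> measure (relay_space RD) (outage_undecoded d \<epsilon>)"
    using gain_below_Times_subset_outage_undecoded sets_outage_undecoded by (rule finite_measure_mono)
  finally show ?thesis .
qed

lemma tendsto_ln_ratio_sandwich:
  fixes f l u :: "real \<Rightarrow> real"
  assumes "eventually (\<lambda>x. 0 < l x \<and> l x \<le> f x \<and> f x \<le> u x) at_top"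
    and "((\<lambda>x. ln (l x) / ln x) \<longlongrightarrow> c) at_top" "((\<lambda>x. ln (u x) / ln x) \<longlongrightarrow> c) at_top"
  shows "((\<lambda>x. ln (f x) / ln x) \<longlongrightarrow> c) at_top"
proof (rule tendsto_sandwich[OF _ _ assms(2,3)])
  show "eventually (\<lambda>x. ln (l x) / ln x \<le> ln (f x) / ln x) at_top"
    using assms(1) eventually_gt_at_top[of 1] by eventually_elim (auto intro!: divide_right_mono)
  show "eventually (\<lambda>x. ln (f x) / ln x \<le> ln (u x) / ln x) at_top"
    using assms(1) eventually_gt_at_top[of 1] by eventually_elim (auto intro!: divide_right_mono)
qed

lemma outage_probability_bounds:
  fixes d RD \<eta> \<epsilon> :: real
  assumes "0 < RD" "0 < \<eta>" "\<eta> \<le> 1" "0 < \<epsilon>" "(1 + d\<^sup>2) * \<epsilon> \<le> \<eta>"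
  defines "K \<equiv> 1 + d\<^sup>2" and "L \<equiv> 1 + RD\<^sup>2"
    and "p \<equiv> measure (relay_space RD) (outage_decoded d \<eta> \<epsilon>) + measure (relay_space RD) (outage_undecoded d \<epsilon>)"
  shows "(\<epsilon> * exp (- \<epsilon>))\<^sup>2 \<le> p"
    and "p \<le> K * \<epsilon> * (K * \<epsilon> / \<eta> * (2 * L + 1 + 4 * L * (log 2 (1 / (K * \<epsilon> / \<eta>)) + 1)))
      + K * \<epsilon> * (L * \<epsilon>)"
proof -
  show "(\<epsilon> * exp (- \<epsilon>))\<^sup>2 \<le> p"
    using measure_outage_undecoded_ge[OF assms(1), of \<epsilon> d] assms(4)
      measure_nonneg[of "relay_space RD" "outage_decoded d \<eta> \<epsilon>"]
    unfolding p_def by linarith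
  have "measure (relay_space RD) (outage_decoded d \<eta> \<epsilon>) \<le>
      K * \<epsilon> * (K * \<epsilon> / \<eta> * (2 * L + 1 + 4 * L * (log 2 (1 / (K * \<epsilon> / \<eta>)) + 1)))"
    using measure_outage_decoded_le_log[OF assms(1-5)] unfolding K_def L_def .
  moreover have "measure (relay_space RD) (outage_undecoded d \<epsilon>) \<le> K * \<epsilon> * (L * \<epsilon>)"
    using measure_outage_undecoded_le[OF assms(1)] assms(4) unfolding K_def L_def by simp
  ultimately show "p \<le> K * \<epsilon> * (K * \<epsilon> / \<eta> * (2 * L + 1 + 4 * L * (log 2 (1 / (K * \<epsilon> / \<eta>)) + 1)))
      + K * \<epsilon> * (L * \<epsilon>)"
    unfolding p_def by linarith
qed

theorem corollary1:
  fixes d RD \<eta> Rt :: real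
  assumes "d > 0" and "RD > 0" and "0 < \<eta>" and "\<eta> \<le> 1" and "Rt > 0"
  shows "((\<lambda>P. - (ln (outage1 d RD \<eta> Rt P) / ln P)) \<longlongrightarrow> 2) at_top"
proof -
  define \<tau> where "\<tau> = 2 powr (2 * Rt) - 1"
  define K where "K = 1 + d\<^sup>2"
  define L where "L = 1 + RD\<^sup>2"
  have \<tau>: "0 < \<tau>" using assms(5) by (simp add: \<tau>_def)
  have K: "0 < K" and L: "0 < L" by (simp_all add: K_def L_def add_pos_nonneg)
  define lower where "lower \<epsilon> = (\<epsilon> * exp (- \<epsilon>))\<^sup>2" for \<epsilon> :: real
  define upper where "upper \<epsilon> = K * \<epsilon> * (K * \<epsilon> / \<eta> * (2 * L + 1 + 4 * L * (log 2 (1 / (K * \<epsilon> / \<eta>)) + 1)))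
      + K * \<epsilon> * (L * \<epsilon>)" for \<epsilon> :: real
  have "eventually (\<lambda>P. 0 < lower (\<tau> / P) \<and> lower (\<tau> / P) \<le> outage1 d RD \<eta> Rt P \<and>
      outage1 d RD \<eta> Rt P \<le> upper (\<tau> / P)) at_top"
    using eventually_ge_at_top[of "K * \<tau> / \<eta>"] eventually_gt_at_top[of 0]
  proof eventually_elim
    case (elim P)
    then have "0 < \<tau> / P" "(1 + d\<^sup>2) * (\<tau> / P) \<le> \<eta>"
      using \<tau> assms(3) by (simp_all add: K_def field_simps)
    then have "lower (\<tau> / P) \<le> outage1 d RD \<eta> Rt P \<and> outage1 d RD \<eta> Rt P \<le> upper (\<tau> / P)"
      unfolding outage1_eq lower_def upper_def K_def L_def \<tau>_def[symmetric]
      by (intro conjI outage_probability_bounds[OF assms(2-4)])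
    moreover have "0 < lower (\<tau> / P)"
      using \<tau> elim by (simp add: lower_def)
    ultimately show ?case by simp
  qed
  moreover have "((\<lambda>P. ln (lower (\<tau> / P)) / ln P) \<longlongrightarrow> -2) at_top"
    unfolding lower_def using \<tau> by real_asymp
  moreover have "((\<lambda>P. ln (upper (\<tau> / P)) / ln P) \<longlongrightarrow> -2) at_top"
    unfolding upper_def using \<tau> K L assms(3) by real_asymp
  ultimately show ?thesis
    using tendsto_minus[OF tendsto_ln_ratio_sandwich] by fastforce
qed

end
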